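(* Let $\{a_i\}_{1\le i\le p}$ be a finite real sequence, and let $S_1=\{1,\dots,k_1\}$, $S_2=\{k_1,\dots,k_2\}$, $S_3=\{k_2,\dots,k_3\}$ be three neighboring maximal segments, where $S_1$ and $S_3$ are maximal non-decreasing segments and $S_2$ is a maximal decreasing segment. For each fixed $j\in S_3$, the function $i\mapsto\mathrm{aver}(i,j)$ satisfies: (1) $\mathrm{aver}(i,j)<\mathrm{aver}(i-1,j)$ for each $i^*(j)<i\le k_1$; (2) $\mathrm{aver}(i,j)\ge a_{i-1}$ for all $2\le i\le i^*(j)$; (3) $\mathrm{aver}(i,j)\ge\mathrm{aver}(i-1,j)$ for each $2\le i\le i^*(j)$.
   Context: For a finite sequence $\{a_i\}_{1\le i\le p}$, $\{k_1,k_1+1,\dots,k_2\}$ is a maximal decreasing segment (MDS) if $a_{k_1}>a_{k_1+1}>\cdots>a_{k_2}$, and ($a_{k_1-1}\le a_{k_1}$ or $k_1=1$), and ($a_{k_2}\ge a_{k_2+1}$ or $k_2=p$); it is a maximal non-decreasing segment (MNDS) if $a_{k_1}\le a_{k_1+1}\le\cdots\le a_{k_2}$, and ($a_{k_1-1}>a_{k_1}$ or $k_1=1$), and ($a_{k_2}<a_{k_2+1}$ or $k_2=p$). Set $\mathrm{aver}(i,j)=\frac{1}{j-i+1}\sum_{l=i}^j a_l$. For $j\in S_3$, let $\mathcal{I}_j=\{i:\ 2\le i\le k_1,\ a_{i-1}>\mathrm{aver}(i,j)\}$ and define the left balance point $i^*(j)=\min_{i\in\mathcal{I}_j}i-1$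 if $\mathcal{I}_j\ne\emptyset$, and $i^*(j)=k_1$ if $\mathcal{I}_j=\emptyset$. *)

theory Defs
  imports Complex_Main
begin

text \<open>A finite real sequence a_1,...,a_p is modelled by a :: nat => real; only indices 1..p matter.\<close>

definition MDS :: "(nat \<Rightarrow> real) \<Rightarrow> nat \<Rightarrow> nat \<Rightarrow> nat \<Rightarrow> bool" where
  "MDS a p k1 k2 \<longleftrightarrow> 1 \<le> k1 \<and> k1 \<le> k2 \<and> k2 \<le> p
     \<and> (\<forall>l. k1 \<le> l \<and> l < k2 \<longrightarrow> a l > a (l + 1))
     \<and> (k1 = 1 \<or> a (k1 - 1) \<le> a k1)
     \<and> (k2 = p \<or> a k2 \<le> a (k2 + 1))"

definition MNDS :: "(nat \<Rightarrow> real) \<Rightarrow> nat \<Rightarrow> nat \<Rightarrow> nat \<Rightarrow> bool" where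
  "MNDS a p k1 k2 \<longleftrightarrow> 1 \<le> k1 \<and> k1 \<le> k2 \<and> k2 \<le> p
     \<and> (\<forall>l. k1 \<le> l \<and> l < k2 \<longrightarrow> a l \<le> a (l + 1))
     \<and> (k1 = 1 \<or> a (k1 - 1) > a k1)
     \<and> (k2 = p \<or> a k2 > a (k2 + 1))"

definition aver :: "(nat \<Rightarrow> real) \<Rightarrow> nat \<Rightarrow> nat \<Rightarrow> real" where
  "aver a i j = (\<Sum>l = i..j. a l) / (real j - real i + 1)"

definition balI :: "(nat \<Rightarrow> real) \<Rightarrow> nat \<Rightarrow> nat \<Rightarrow> nat set" where
  "balI a k1 j = {i. 2 \<le> i \<and> i \<le> k1 \<and> a (i - 1) > aver a i j}"

definition istar :: "(nat \<Rightarrow> real) \<Rightarrow> nat \<Rightarrow> nat \<Rightarrow> nat" where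
  "istar a k1 j = (if balI a k1 j = {} then k1 else Min (balI a k1 j) - 1)"

end

theory Submission
  imports Defs
begin

text \<open>For \<open>i < j\<close>, \<open>aver a i j\<close> is a strict convex combination of \<open>a i\<close> and \<open>aver a (Suc i) j\<close>.
  Hence the averages decrease at \<open>i\<close> exactly when the dropped term \<open>a (i - 1)\<close> lies above them,
  and once \<open>a (i - 1)\<close> exceeds \<open>aver a i j\<close> on the non-decreasing segment \<open>S\<^sub>1\<close>, so does every
  later \<open>a i\<close>: the set \<open>balI a k1 j\<close> is an up-set of \<open>{2..k1}\<close> with least element \<open>istar a k1 j + 1\<close>.\<close>

lemma aver_split_head:
  assumes "i < j"
  shows "(real j - real i + 1) * aver a i j = a i + (real j - real i) * aver a (Suc i) j"
proof -
  have "(\<Sum>l = i..j. a l) = a i + (\<Sum>l = Suc i..j. a l)"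
    using assms by (simp add: sum.atLeast_Suc_atMost)
  moreover have "real j - real (Suc i) + 1 = real j - real i" by simp
  ultimately show ?thesis
    using assms unfolding aver_def by (simp add: field_simps)
qed

lemma aver_Suc_less_aver_iff:
  assumes "i < j"
  shows "aver a (Suc i) j < aver a i j \<longleftrightarrow> aver a (Suc i) j < a i"
proof -
  have "(real j - real i + 1) * aver a (Suc i) j < (real j - real i + 1) * aver a i j
      \<longleftrightarrow> aver a (Suc i) j < a i"
    using aver_split_head[OF assms, of a] by (simp add: algebra_simps)
  then show ?thesis
    using assms by (simp add: mult_less_cancel_left)
qed

lemma aver_less_head_iff:
  assumes "i < j"
  shows "aver a i j < a i \<longleftrightarrow> aver a (Suc i) j < a i"
proof -
  define d where "d = real j - real i"
  have d: "d > 0" using assms unfolding d_def by simp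
  have split: "(d + 1) * aver a i j = a i + d * aver a (Suc i) j"
    using aver_split_head[OF assms, of a] unfolding d_def .
  have "aver a i j < a i \<longleftrightarrow> (d + 1) * aver a i j < (d + 1) * a i"
    using d by simp
  also have "\<dots> \<longleftrightarrow> d * aver a (Suc i) j < d * a i"
    unfolding split by (simp add: algebra_simps)
  also have "\<dots> \<longleftrightarrow> aver a (Suc i) j < a i"
    using d by simp
  finally show ?thesis .
qed

lemma aver_less_prev_Suc:
  assumes "i < j" "a (i - 1) \<le> a i" "aver a i j < a (i - 1)"
  shows "aver a (Suc i) j < a i"
  using assms aver_less_head_iff[OF assms(1), of a] by linarith

lemma finite_balI: "finite (balI a k1 j)"
  unfolding balI_def by auto

lemma istar_le: "istar a k1 j \<le> k1"
proof (cases "balI a k1 j = {}")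
  case False
  then have "Min (balI a k1 j) \<in> balI a k1 j" using finite_balI by simp
  then show ?thesis unfolding istar_def balI_def by auto
qed (simp add: istar_def)

lemma istar_ge_1:
  assumes "1 \<le> k1"
  shows "1 \<le> istar a k1 j"
proof (cases "balI a k1 j = {}")
  case False
  then have "Min (balI a k1 j) \<in> balI a k1 j" using finite_balI by simp
  then have "2 \<le> Min (balI a k1 j)" unfolding balI_def by simp
  then show ?thesis using False unfolding istar_def by simp
qed (use assms in \<open>simp add: istar_def\<close>)

lemma prev_le_aver_upto_istar:
  assumes "2 \<le> i" "i \<le> istar a k1 j"
  shows "a (i - 1) \<le> aver a i j"
proof (cases "balI a k1 j = {}")
  case True
  then show ?thesis using assms unfolding istar_def balI_def by auto
next
  case False
  then have "i < Min (balI a k1 j)" using assms unfolding istar_def by auto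
  then have "i \<notin> balI a k1 j" using finite_balI by (meson Min_le not_le)
  moreover have "Min (balI a k1 j) \<in> balI a k1 j" using finite_balI False by simp
  ultimately show ?thesis using assms \<open>i < Min (balI a k1 j)\<close> unfolding balI_def by auto
qed

lemma aver_less_prev_beyond_istar:
  assumes mono: "\<And>l. 1 \<le> l \<Longrightarrow> l < k1 \<Longrightarrow> a l \<le> a (l + 1)"
    and "k1 \<le> j" "istar a k1 j < i" "i \<le> k1"
  shows "aver a i j < a (i - 1)"
proof -
  define m where "m = Min (balI a k1 j)"
  have nonempty: "balI a k1 j \<noteq> {}" using assms(3,4) unfolding istar_def by auto
  then have "m \<in> balI a k1 j" using finite_balI unfolding m_def by simp
  then have m2: "2 \<le> m" and base: "aver a m j < a (m - 1)"
    unfolding balI_def by auto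
  have "m \<le> i" using assms(3) nonempty m2 unfolding istar_def m_def by simp
  then show ?thesis using \<open>i \<le> k1\<close>
  proof (induction i rule: dec_induct)
    case (step n)
    have "a (n - 1) \<le> a n" using mono[of "n - 1"] step m2 by simp
    then show ?case
      using aver_less_prev_Suc[of n j a] step \<open>k1 \<le> j\<close> by simp
  qed (use base in simp)
qed

theorem lemma2:
  fixes a :: "nat \<Rightarrow> real" and p k1 k2 k3 j :: nat
  assumes S1: "MNDS a p 1 k1"
    and S2: "MDS a p k1 k2"
    and S3: "MNDS a p k2 k3"
    and hj: "j \<in> {k2..k3}"
  shows "(\<forall>i. istar a k1 j < i \<and> i \<le> k1 \<longrightarrow> aver a i j < aver a (i - 1) j)
       \<and> (\<forall>i. 2 \<le> i \<and> i \<le> istar a k1 j \<longrightarrow> aver a i j \<ge> a (i - 1))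
       \<and> (\<forall>i. 2 \<le> i \<and> i \<le> istar a k1 j \<longrightarrow> aver a i j \<ge> aver a (i - 1) j)"
proof -
  have mono: "\<And>l. 1 \<le> l \<Longrightarrow> l < k1 \<Longrightarrow> a l \<le> a (l + 1)"
    using S1 unfolding MNDS_def by blast
  have "k1 \<le> j" using S2 hj unfolding MDS_def by auto
  have step_iff: "aver a i j < aver a (i - 1) j \<longleftrightarrow> aver a i j < a (i - 1)"
    if "2 \<le> i" "i \<le> k1" for i
    using aver_Suc_less_aver_iff[of "i - 1" j a] that \<open>k1 \<le> j\<close> by simp
  have "1 \<le> istar a k1 j"
    using S1 istar_ge_1[of k1 a j] unfolding MNDS_def by simp
  show ?thesis
  proof (intro conjI allI impI)
    fix i assume i: "istar a k1 j < i \<and> i \<le> k1"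
    with \<open>1 \<le> istar a k1 j\<close> show "aver a i j < aver a (i - 1) j"
      using step_iff aver_less_prev_beyond_istar[of k1 a, OF mono \<open>k1 \<le> j\<close>] by simp
  next
    fix i assume "2 \<le> i \<and> i \<le> istar a k1 j"
    then show "a (i - 1) \<le> aver a i j" using prev_le_aver_upto_istar by blast
  next
    fix i assume i: "2 \<le> i \<and> i \<le> istar a k1 j"
    then have "i \<le> k1" using istar_le[of a k1 j] by linarith
    with i show "aver a (i - 1) j \<le> aver a i j"
      using step_iff prev_le_aver_upto_istar by (meson not_less)
  qed
qed

end
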